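(* Let $\ell_n>0$, $\sigma_{n,0}>0$, $\sigma_{n,1}\ge0$, $\sigma_{n,-1}\ge0$, $\kappa_n\in\mathbb R$ for $n\in\mathbb N$, and assume $$\liminf_{n\to\infty}\sigma_{n,0}>0,\qquad \limsup_{n\to\infty}\sigma_{n,1}\sqrt{\ell_{n+1}/\ell_n}<\infty,\qquad \limsup_{n\to\infty}\sigma_{n,-1}\sqrt{\ell_{n-1}/\ell_n}<\infty,\qquad \limsup_{n\to\infty}\frac{|\kappa_n|}{\sqrt{\ell_n}}<\infty .$$ If a real sequence $(x_n)_{n\in\mathbb N}$ (with some $x_0\in\mathbb R$) satisfies $$\ell_n = x_n\big(\sigma_{n,1}x_{n+1}+\sigma_{n,0}x_n+\sigma_{n,-1}x_{n-1}\big)+\kappa_n x_n,\qquad n\in\mathbb N,$$ then $$\liminf_{n\to\infty}\frac{x_n}{\sqrt{\ell_n}}>-\infty\iff\limsup_{n\to\infty}\frac{x_n}{\sqrt{\ell_n}}<\infty .$$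
   Context: $\mathbb N=\{1,2,3,\dots\}$. The sequence $(x_n)$ need not be positive. *)

theory Defs
  imports "HOL-Analysis.Analysis"
begin

end

theory Submission
  imports Defs
begin

text \<open>
  Dividing the recurrence by \<open>\<ell>\<^sub>n\<close> turns it, for \<open>y\<^sub>n = x\<^sub>n / \<surd>\<ell>\<^sub>n\<close>, into
  \<open>1 = \<sigma>\<^sub>n\<^sub>,\<^sub>0 y\<^sub>n\<^sup>2 + y\<^sub>n (a\<^sub>n y\<^sub>n\<^sub>+\<^sub>1 + b\<^sub>n y\<^sub>n\<^sub>-\<^sub>1 + k\<^sub>n)\<close> with eventually bounded
  coefficients \<open>a\<^sub>n, b\<^sub>n \<ge> 0\<close>, \<open>k\<^sub>n\<close> and \<open>\<sigma>\<^sub>n\<^sub>,\<^sub>0\<close> eventually bounded away from 0.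
  If \<open>y\<close> is eventually bounded below, the bracket is bounded below by a constant \<open>-L\<close>,
  so every large \<open>y\<^sub>n > 1\<close> satisfies \<open>c y\<^sub>n\<^sup>2 \<le> 1 + L y\<^sub>n\<close>, which bounds \<open>y\<^sub>n\<close> above.
  The substitution \<open>(y, k) \<mapsto> (-y, -k)\<close> preserves the normalized recurrence and
  gives the converse implication.
\<close>

lemma limsup_ereal_less_PInf_iff:
  fixes f :: "nat \<Rightarrow> real"
  shows "limsup (\<lambda>n. ereal (f n)) < \<infinity> \<longleftrightarrow> (\<exists>B. \<forall>\<^sub>F n in sequentially. f n \<le> B)"
proof
  assume "limsup (\<lambda>n. ereal (f n)) < \<infinity>"
  then obtain B :: nat where "limsup (\<lambda>n. ereal (f n)) < ereal (real B)"
    using less_PInf_Ex_of_nat by auto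
  then have "\<forall>\<^sub>F n in sequentially. ereal (f n) < ereal (real B)"
    by (rule Limsup_lessD)
  then show "\<exists>B. \<forall>\<^sub>F n in sequentially. f n \<le> B"
    by (intro exI[of _ "real B"]) (auto elim: eventually_mono)
next
  assume "\<exists>B. \<forall>\<^sub>F n in sequentially. f n \<le> B"
  then obtain B where "\<forall>\<^sub>F n in sequentially. f n \<le> B" ..
  then have "limsup (\<lambda>n. ereal (f n)) \<le> ereal B"
    by (intro Limsup_bounded) (auto elim: eventually_mono)
  then show "limsup (\<lambda>n. ereal (f n)) < \<infinity>"
    by auto
qed

lemma liminf_ereal_greater_imp_eventually_ge:
  fixes f :: "nat \<Rightarrow> real"
  assumes "z < liminf (\<lambda>n. ereal (f n))"
  shows "\<exists>c. z < ereal c \<and> (\<forall>\<^sub>F n in sequentially. c \<le> f n)"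
proof -
  obtain c where c: "z < ereal c" "ereal c < liminf (\<lambda>n. ereal (f n))"
    using ereal_dense2[OF assms] by blast
  then have "\<forall>\<^sub>F n in sequentially. ereal c < ereal (f n)"
    by (intro less_LiminfD)
  then show ?thesis
    using c(1) by (intro exI[of _ c]) (auto elim: eventually_mono)
qed

lemma liminf_ereal_greater_MInf_iff:
  fixes f :: "nat \<Rightarrow> real"
  shows "-\<infinity> < liminf (\<lambda>n. ereal (f n)) \<longleftrightarrow> (\<exists>B. \<forall>\<^sub>F n in sequentially. B \<le> f n)"
proof
  assume "-\<infinity> < liminf (\<lambda>n. ereal (f n))"
  then show "\<exists>B. \<forall>\<^sub>F n in sequentially. B \<le> f n"
    using liminf_ereal_greater_imp_eventually_ge by blast
next
  assume "\<exists>B. \<forall>\<^sub>F n in sequentially. B \<le> f n"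
  then obtain B where "\<forall>\<^sub>F n in sequentially. B \<le> f n" ..
  then have "ereal B \<le> liminf (\<lambda>n. ereal (f n))"
    by (intro Liminf_bounded) (auto elim: eventually_mono)
  then show "-\<infinity> < liminf (\<lambda>n. ereal (f n))"
    by auto
qed

lemma eventually_sequentially_pred:
  "eventually P sequentially \<Longrightarrow> \<forall>\<^sub>F n in sequentially. P (n - 1)"
  unfolding eventually_sequentially by (metis add_le_imp_le_diff)

lemma normalized_recurrence:
  fixes L L1 L2 X X1 X2 s s1 s2 \<kappa> :: real
  assumes "0 < L" "0 < L1" "0 < L2"
    and "L = X * (s1 * X1 + s * X + s2 * X2) + \<kappa> * X"
  shows "1 = s * (X / sqrt L)\<^sup>2 + X / sqrt L *
           (s1 * sqrt (L1 / L) * (X1 / sqrt L1) + s2 * sqrt (L2 / L) * (X2 / sqrt L2)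
            + \<kappa> / sqrt L)"
proof -
  define u where "u = sqrt L"
  have u: "0 < u" "u\<^sup>2 = L"
    using assms(1) by (auto simp: u_def)
  have neighbours: "s1 * sqrt (L1 / L) * (X1 / sqrt L1) = s1 * X1 / u"
    "s2 * sqrt (L2 / L) * (X2 / sqrt L2) = s2 * X2 / u"
    using assms(2,3) by (simp_all add: u_def real_sqrt_divide)
  have "s * (X / u)\<^sup>2 + X / u *
      (s1 * sqrt (L1 / L) * (X1 / sqrt L1) + s2 * sqrt (L2 / L) * (X2 / sqrt L2) + \<kappa> / u)
      = (X * (s1 * X1 + s * X + s2 * X2) + \<kappa> * X) / u\<^sup>2"
    using u(1) unfolding neighbours by (simp add: field_simps power2_eq_square)
  then show ?thesis
    using assms(1,4) u by (simp add: u_def)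
qed

lemma quadratic_upper_bound:
  fixes c s y t L :: real
  assumes "0 < c" "c \<le> s" "1 = s * y\<^sup>2 + y * t" "-L \<le> t"
  shows "y \<le> max 1 ((1 + L) / c)"
proof (cases "y \<le> 1")
  case False
  have "c * y\<^sup>2 \<le> s * y\<^sup>2"
    using assms(2) by (simp add: mult_right_mono)
  also have "\<dots> = 1 - y * t"
    using assms(3) by simp
  also have "\<dots> \<le> 1 + y * L"
    using False assms(4) mult_left_mono[of "-L" t y] by simp
  also have "\<dots> \<le> y * (1 + L)"
    using False by (simp add: algebra_simps)
  finally have "y * (c * y) \<le> y * (1 + L)"
    by (simp add: power2_eq_square ac_simps)
  then have "c * y \<le> 1 + L"
    using False by simp
  then have "y \<le> (1 + L) / c"
    using assms(1) by (simp add: pos_le_divide_eq mult.commute)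
  then show ?thesis
    by simp
qed simp

lemma weighted_sum_lower_bound:
  fixes a b k p q A B K M :: real
  assumes "0 \<le> a" "a \<le> A" "0 \<le> b" "b \<le> B" "\<bar>k\<bar> \<le> K"
    and "0 \<le> M" "-M \<le> p" "-M \<le> q"
  shows "-((A + B) * M + K) \<le> a * p + b * q + k"
proof -
  have "-(A * M) \<le> a * p"
    using mult_right_mono[OF assms(2,6)] mult_left_mono[OF assms(7,1)] by simp
  moreover have "-(B * M) \<le> b * q"
    using mult_right_mono[OF assms(4,6)] mult_left_mono[OF assms(8,3)] by simp
  ultimately show ?thesis
    using assms(5) by (simp add: algebra_simps)
qed

lemma recurrence_bounded_below_imp_bounded_above:
  fixes y s a b k :: "nat \<Rightarrow> real"
  assumes "0 < c"
    and coeffs: "\<forall>\<^sub>F n in sequentially.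
      c \<le> s n \<and> 0 \<le> a n \<and> a n \<le> A \<and> 0 \<le> b n \<and> b n \<le> B \<and> \<bar>k n\<bar> \<le> K"
    and rec: "\<forall>\<^sub>F n in sequentially.
      1 = s n * (y n)\<^sup>2 + y n * (a n * y (n + 1) + b n * y (n - 1) + k n)"
    and below: "\<forall>\<^sub>F n in sequentially. M \<le> y n"
  shows "\<exists>U. \<forall>\<^sub>F n in sequentially. y n \<le> U"
proof -
  define M' where "M' = max 0 (-M)"
  have lower: "\<forall>\<^sub>F n in sequentially. -M' \<le> y n"
    using below by (auto simp: M'_def elim: eventually_mono)
  then have "\<forall>\<^sub>F n in sequentially. -M' \<le> y (n + 1)"
    using eventually_sequentially_Suc[of "\<lambda>n. -M' \<le> y n"] by simp
  moreover have "\<forall>\<^sub>F n in sequentially. -M' \<le> y (n - 1)"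
    using lower by (rule eventually_sequentially_pred)
  ultimately have neighbours: "\<forall>\<^sub>F n in sequentially. -M' \<le> y (n + 1) \<and> -M' \<le> y (n - 1)"
    by (rule eventually_conj)
  have "\<forall>\<^sub>F n in sequentially. y n \<le> max 1 ((1 + ((A + B) * M' + K)) / c)"
    using coeffs rec neighbours
  proof eventually_elim
    case (elim n)
    then show ?case
      using \<open>0 < c\<close> weighted_sum_lower_bound[of "a n" A "b n" B "k n" K M']
      by (intro quadratic_upper_bound[of c "s n" _ "a n * y (n + 1) + b n * y (n - 1) + k n"])
        (auto simp: M'_def)
  qed
  then show ?thesis ..
qed

lemma recurrence_bounded_below_iff_bounded_above:
  fixes y s a b k :: "nat \<Rightarrow> real"
  assumes "0 < c"
    and coeffs: "\<forall>\<^sub>F n in sequentially.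
      c \<le> s n \<and> 0 \<le> a n \<and> a n \<le> A \<and> 0 \<le> b n \<and> b n \<le> B \<and> \<bar>k n\<bar> \<le> K"
    and rec: "\<forall>\<^sub>F n in sequentially.
      1 = s n * (y n)\<^sup>2 + y n * (a n * y (n + 1) + b n * y (n - 1) + k n)"
  shows "(\<exists>M. \<forall>\<^sub>F n in sequentially. M \<le> y n) \<longleftrightarrow> (\<exists>U. \<forall>\<^sub>F n in sequentially. y n \<le> U)"
proof
  assume "\<exists>M. \<forall>\<^sub>F n in sequentially. M \<le> y n"
  then show "\<exists>U. \<forall>\<^sub>F n in sequentially. y n \<le> U"
    using recurrence_bounded_below_imp_bounded_above[OF assms] by blast
next
  assume "\<exists>U. \<forall>\<^sub>F n in sequentially. y n \<le> U"
  have "\<forall>\<^sub>F n in sequentially. c \<le> s n \<and> 0 \<le> a n \<and> a n \<le> A \<and>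
      0 \<le> b n \<and> b n \<le> B \<and> \<bar>- k n\<bar> \<le> K"
    using coeffs by simp
  moreover have "\<forall>\<^sub>F n in sequentially. 1 = s n * (- y n)\<^sup>2 +
      - y n * (a n * - y (n + 1) + b n * - y (n - 1) + - k n)"
    using rec by (auto simp: algebra_simps elim: eventually_mono)
  moreover from \<open>\<exists>U. \<forall>\<^sub>F n in sequentially. y n \<le> U\<close>
  obtain U where "\<forall>\<^sub>F n in sequentially. -U \<le> - y n"
    by (auto elim: eventually_mono)
  ultimately have "\<exists>V. \<forall>\<^sub>F n in sequentially. - y n \<le> V"
    by (rule recurrence_bounded_below_imp_bounded_above[OF \<open>0 < c\<close>])
  then obtain V where "\<forall>\<^sub>F n in sequentially. - y n \<le> V" ..
  then have "\<forall>\<^sub>F n in sequentially. -V \<le> y n"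
    by (auto elim: eventually_mono)
  then show "\<exists>M. \<forall>\<^sub>F n in sequentially. M \<le> y n" ..
qed

theorem theorem6p1:
  fixes l s0 s1 sm1 \<kappa> x :: "nat \<Rightarrow> real"
  assumes l_pos: "\<And>n. n \<ge> 1 \<Longrightarrow> l n > 0"
    and s0_pos: "\<And>n. n \<ge> 1 \<Longrightarrow> s0 n > 0"
    and s1_nonneg: "\<And>n. n \<ge> 1 \<Longrightarrow> s1 n \<ge> 0"
    and sm1_nonneg: "\<And>n. n \<ge> 1 \<Longrightarrow> sm1 n \<ge> 0"
    and h0: "liminf (\<lambda>n. ereal (s0 n)) > 0"
    and h1: "limsup (\<lambda>n. ereal (s1 n * sqrt (l (n + 1) / l n))) < \<infinity>"
    and hm1: "limsup (\<lambda>n. ereal (sm1 n * sqrt (l (n - 1) / l n))) < \<infinity>"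
    and hk: "limsup (\<lambda>n. ereal (\<bar>\<kappa> n\<bar> / sqrt (l n))) < \<infinity>"
    and rec: "\<And>n. n \<ge> 1 \<Longrightarrow>
       l n = x n * (s1 n * x (n + 1) + s0 n * x n + sm1 n * x (n - 1)) + \<kappa> n * x n"
  shows "liminf (\<lambda>n. ereal (x n / sqrt (l n))) > -\<infinity> \<longleftrightarrow>
         limsup (\<lambda>n. ereal (x n / sqrt (l n))) < \<infinity>"
proof -
  obtain A where A: "\<forall>\<^sub>F n in sequentially. s1 n * sqrt (l (n + 1) / l n) \<le> A"
    using h1 unfolding limsup_ereal_less_PInf_iff by blast
  obtain B where B: "\<forall>\<^sub>F n in sequentially. sm1 n * sqrt (l (n - 1) / l n) \<le> B"
    using hm1 unfolding limsup_ereal_less_PInf_iff by blast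
  obtain K where K: "\<forall>\<^sub>F n in sequentially. \<bar>\<kappa> n\<bar> / sqrt (l n) \<le> K"
    using hk unfolding limsup_ereal_less_PInf_iff by blast
  obtain c where c: "0 < c" "\<forall>\<^sub>F n in sequentially. c \<le> s0 n"
    using liminf_ereal_greater_imp_eventually_ge[OF h0] by auto
  have large: "\<forall>\<^sub>F n in sequentially. 2 \<le> n"
    by (rule eventually_ge_at_top)
  have "\<forall>\<^sub>F n in sequentially. c \<le> s0 n \<and>
      0 \<le> s1 n * sqrt (l (n + 1) / l n) \<and> s1 n * sqrt (l (n + 1) / l n) \<le> A \<and>
      0 \<le> sm1 n * sqrt (l (n - 1) / l n) \<and> sm1 n * sqrt (l (n - 1) / l n) \<le> B \<and>
      \<bar>\<kappa> n / sqrt (l n)\<bar> \<le> K"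
    using A B K c(2) large
  proof eventually_elim
    case (elim n)
    then have "0 < l (n - 1)" "0 < l n" "0 < l (n + 1)"
      by (auto intro: l_pos)
    then show ?case
      using elim s1_nonneg[of n] sm1_nonneg[of n] by (simp add: abs_div)
  qed
  moreover have "\<forall>\<^sub>F n in sequentially. 1 = s0 n * (x n / sqrt (l n))\<^sup>2 + x n / sqrt (l n) *
      (s1 n * sqrt (l (n + 1) / l n) * (x (n + 1) / sqrt (l (n + 1))) +
       sm1 n * sqrt (l (n - 1) / l n) * (x (n - 1) / sqrt (l (n - 1))) + \<kappa> n / sqrt (l n))"
    using large
  proof eventually_elim
    case (elim n)
    then show ?case
      by (intro normalized_recurrence l_pos rec) auto
  qed
  ultimately show ?thesis
    unfolding liminf_ereal_greater_MInf_iff limsup_ereal_less_PInf_iff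
    by (rule recurrence_bounded_below_iff_bounded_above[OF \<open>0 < c\<close>])
qed

end
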